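(* Let $E=(E^0,E^1,r,s)$ be a graph with no cycles and no line points. Then for any vertex $v\in E^0$ and any infinite path $\alpha=f_1f_2\cdots$ in $E$ there exists a finite path $\mu=e_1\cdots e_n$ (with $n\ge1$) such that $s(e_1)=v$ and $e_n\neq f_i$ for all $i\in\mathbb{N}$.
   Context: A graph $E=(E^0,E^1,r,s)$ has vertex set $E^0$, edge set $E^1$, range and source maps. A finite path of positive length is $e_1\cdots e_n$ with $r(e_i)=s(e_{i+1})$; an infinite path is $f_1f_2\cdots$ with $r(f_i)=s(f_{i+1})$. A cycle is a finite path $e_1\cdots e_n$ ($n\ge1$) with $s(e_1)=r(e_n)$. For $v\in E^0$, $T(v)$ is the set of vertices $w$ such that there is a path from $v$ to $w$ (including $v$). A bifurcation vertex is one emitting at least two edges. $v$ is a line point if $T(v)$ contains no bifurcation vertex and no vertex of $T(v)$ lies on a cycle (in particular, every sink is a line point). *)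

theory Defs
  imports Main
begin

definition graph :: "'v set \<Rightarrow> 'e set \<Rightarrow> ('e \<Rightarrow> 'v) \<Rightarrow> ('e \<Rightarrow> 'v) \<Rightarrow> bool" where
  "graph V Ed r s \<longleftrightarrow> (\<forall>e\<in>Ed. r e \<in> V \<and> s e \<in> V)"

definition fin_path :: "'e set \<Rightarrow> ('e \<Rightarrow> 'v) \<Rightarrow> ('e \<Rightarrow> 'v) \<Rightarrow> 'e list \<Rightarrow> bool" where
  "fin_path Ed r s \<mu> \<longleftrightarrow> \<mu> \<noteq> [] \<and> set \<mu> \<subseteq> Ed \<and>
     (\<forall>i. Suc i < length \<mu> \<longrightarrow> r (\<mu> ! i) = s (\<mu> ! Suc i))"

text \<open>Infinite path f_1 f_2 ... (indexed from 0 here).\<close>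
definition inf_path :: "'e set \<Rightarrow> ('e \<Rightarrow> 'v) \<Rightarrow> ('e \<Rightarrow> 'v) \<Rightarrow> (nat \<Rightarrow> 'e) \<Rightarrow> bool" where
  "inf_path Ed r s f \<longleftrightarrow> (\<forall>i. f i \<in> Ed) \<and> (\<forall>i. r (f i) = s (f (Suc i)))"

definition is_cycle :: "'e set \<Rightarrow> ('e \<Rightarrow> 'v) \<Rightarrow> ('e \<Rightarrow> 'v) \<Rightarrow> 'e list \<Rightarrow> bool" where
  "is_cycle Ed r s \<mu> \<longleftrightarrow> fin_path Ed r s \<mu> \<and> s (hd \<mu>) = r (last \<mu>)"

definition Tset :: "'e set \<Rightarrow> ('e \<Rightarrow> 'v) \<Rightarrow> ('e \<Rightarrow> 'v) \<Rightarrow> 'v \<Rightarrow> 'v set" where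
  "Tset Ed r s v = insert v {w. \<exists>\<mu>. fin_path Ed r s \<mu> \<and> s (hd \<mu>) = v \<and> r (last \<mu>) = w}"

definition bifurcation :: "'e set \<Rightarrow> ('e \<Rightarrow> 'v) \<Rightarrow> 'v \<Rightarrow> bool" where
  "bifurcation Ed s v \<longleftrightarrow> (\<exists>e1\<in>Ed. \<exists>e2\<in>Ed. e1 \<noteq> e2 \<and> s e1 = v \<and> s e2 = v)"

definition on_cycle :: "'e set \<Rightarrow> ('e \<Rightarrow> 'v) \<Rightarrow> ('e \<Rightarrow> 'v) \<Rightarrow> 'v \<Rightarrow> bool" where
  "on_cycle Ed r s w \<longleftrightarrow> (\<exists>\<mu>. is_cycle Ed r s \<mu> \<and> (\<exists>e\<in>set \<mu>. s e = w))"

definition line_point :: "'e set \<Rightarrow> ('e \<Rightarrow> 'v) \<Rightarrow> ('e \<Rightarrow> 'v) \<Rightarrow> 'v \<Rightarrow> bool" where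
  "line_point Ed r s v \<longleftrightarrow>
     (\<forall>w\<in>Tset Ed r s v. \<not> bifurcation Ed s w) \<and> (\<forall>w\<in>Tset Ed r s v. \<not> on_cycle Ed r s w)"

end

theory Submission
  imports Defs
begin

text \<open>Since v is not a line point and no vertex lies on a cycle, some vertex w of T(v) emits two
  distinct edges e1, e2, and each of them is the last edge of a path starting at v. They cannot
  both occur on \<alpha>: in an acyclic graph an infinite path visits each vertex as a source at most
  once, since the segment between two visits would be a cycle.\<close>

lemma fin_path_snoc:
  assumes "fin_path Ed r s \<mu>" "e \<in> Ed" "r (last \<mu>) = s e"
  shows "fin_path Ed r s (\<mu> @ [e])"
  unfolding fin_path_def
proof (intro conjI allI impI)
  show "\<mu> @ [e] \<noteq> []" "set (\<mu> @ [e]) \<subseteq> Ed"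
    using assms(1,2) by (auto simp: fin_path_def)
  fix i
  assume "Suc i < length (\<mu> @ [e])"
  then consider "Suc i < length \<mu>" | "Suc i = length \<mu>"
    by (auto simp: less_Suc_eq)
  then show "r ((\<mu> @ [e]) ! i) = s ((\<mu> @ [e]) ! Suc i)"
  proof cases
    case 1
    then show ?thesis
      using assms(1) by (simp add: fin_path_def nth_append)
  next
    case 2
    then have "\<mu> ! i = last \<mu>"
      by (metis diff_Suc_1 last_conv_nth list.size(3) nat.distinct(1))
    with 2 show ?thesis
      using assms(3) by (simp add: nth_append)
  qed
qed

lemma is_cycle_inf_path_segment:
  assumes "inf_path Ed r s \<alpha>" "i < j" "s (\<alpha> i) = s (\<alpha> j)"
  shows "is_cycle Ed r s (map \<alpha> [i..<j])"
proof -
  have "fin_path Ed r s (map \<alpha> [i..<j])"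
    using assms(1,2) by (auto simp: fin_path_def inf_path_def)
  moreover have "r (\<alpha> (j - 1)) = s (\<alpha> j)"
    using assms(1,2) unfolding inf_path_def by (metis Suc_diff_1 gr_implies_not0 not_gr_zero)
  moreover have "hd (map \<alpha> [i..<j]) = \<alpha> i" "last (map \<alpha> [i..<j]) = \<alpha> (j - 1)"
    using assms(2) by (simp_all add: hd_map last_map)
  ultimately show ?thesis
    using assms(3) by (simp add: is_cycle_def)
qed

lemma inf_path_source_inj:
  assumes "inf_path Ed r s \<alpha>" "\<nexists>\<mu>. is_cycle Ed r s \<mu>" "s (\<alpha> i) = s (\<alpha> j)"
  shows "i = j"
proof (rule ccontr)
  assume "i \<noteq> j"
  then consider "i < j" | "j < i"
    by linarith
  then show False
    using is_cycle_inf_path_segment[OF assms(1)] assms(2,3) by cases metis+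
qed

lemma Tset_out_edge_path:
  assumes "w \<in> Tset Ed r s v" "e \<in> Ed" "s e = w"
  obtains \<mu> where "fin_path Ed r s \<mu>" "s (hd \<mu>) = v" "last \<mu> = e"
proof (cases "w = v")
  case True
  then show ?thesis
    using assms that[of "[e]"] by (simp add: fin_path_def)
next
  case False
  then obtain \<mu> where \<mu>: "fin_path Ed r s \<mu>" "s (hd \<mu>) = v" "r (last \<mu>) = w"
    using assms(1) unfolding Tset_def by blast
  then have "s (hd (\<mu> @ [e])) = v"
    by (simp add: fin_path_def)
  with \<mu> show ?thesis
    using assms fin_path_snoc that by fastforce
qed

lemma not_line_point_acyclic_bifurcation:
  assumes "\<not> line_point Ed r s v" "\<nexists>\<mu>. is_cycle Ed r s \<mu>"
  obtains w e1 e2 where "w \<in> Tset Ed r s v" "e1 \<in> Ed" "e2 \<in> Ed" "e1 \<noteq> e2"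
    "s e1 = w" "s e2 = w"
  using assms unfolding line_point_def on_cycle_def bifurcation_def by blast

theorem lemma4p6:
  fixes V :: "'v set" and Ed :: "'e set" and r s :: "'e \<Rightarrow> 'v"
  assumes "graph V Ed r s"
    and "\<nexists>\<mu>. is_cycle Ed r s \<mu>"
    and "\<forall>v\<in>V. \<not> line_point Ed r s v"
    and "v \<in> V"
    and "inf_path Ed r s \<alpha>"
  shows "\<exists>\<mu>. fin_path Ed r s \<mu> \<and> s (hd \<mu>) = v \<and> (\<forall>i. last \<mu> \<noteq> \<alpha> i)"
proof (rule ccontr)
  assume no_escape: "\<not> ?thesis"
  obtain w e1 e2 where w: "w \<in> Tset Ed r s v" and e: "e1 \<in> Ed" "e2 \<in> Ed" "e1 \<noteq> e2"
    "s e1 = w" "s e2 = w"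
    using not_line_point_acyclic_bifurcation assms(2-4) by metis
  have on_\<alpha>: "\<exists>i. e = \<alpha> i" if "e \<in> Ed" "s e = w" for e
    using Tset_out_edge_path[OF w that] no_escape by metis
  obtain i j where "e1 = \<alpha> i" "e2 = \<alpha> j"
    using on_\<alpha> e by metis
  with e have "i = j"
    using inf_path_source_inj[OF assms(5,2)] by simp
  with \<open>e1 = \<alpha> i\<close> \<open>e2 = \<alpha> j\<close> \<open>e1 \<noteq> e2\<close> show False
    by simp
qed

end
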